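(* Let $n,m,\ell$ be integers with $n-1\ge m\ge \ell\ge 0$. Then $$\mathfrak Z_n(2^{\{m\}})\,\mathfrak Z_n((-1)^{\{\ell\}})=\mathcal Y_n\big(2^{\{m-\ell\}},1^{\{\ell\}}\big)+\Big(\prod_{r=1}^{n-1}(1-\zeta_n^r)\Big)\sum_{j=0}^{n-m-2}\mathcal Y_n\big(3^{\{m-\ell+1+j\}},2^{\{\ell-1-j\}},1^{\{n-m-2-j\}}\big).$$
   Context: Let $\zeta_n=e^{2\pi\sqrt{-1}/n}$. For integers $s_1,\dots,s_m$ (negative values allowed), define $\mathfrak Z_n(s_1,\dots,s_m):=\sum_{1\le i_1<\cdots<i_m\le n-1}\prod_{k=1}^{m}(1-\zeta_n^{i_k})^{-s_k}$ (equal to $1$ if $m=0$ and to $0$ if $m>n-1$). Define $\mathcal Y_n(s_1,\dots,s_m):=\sum_{\sigma}\mathfrak Z_n(\sigma)$, where $\sigma$ runs over all distinct rearrangements of $(s_1,\dots,s_m)$; $\mathcal Y_n$ of the empty sequence is $1$. Notation: $a^{\{k\}}$ denotes the block $a,\dots,a$ of length $k$; any $\mathcal Y_n$ term in which some block has negative length is interpreted as $0$. *)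

theory Defs
  imports Complex_Main "HOL-Library.Multiset"
begin

definition zeta :: "nat \<Rightarrow> complex" where
  "zeta n = cis (2 * pi / real n)"

definition idx_tuples :: "nat \<Rightarrow> nat \<Rightarrow> nat list set" where
  "idx_tuples n m = {is. length is = m \<and> sorted_wrt (<) is \<and> set is \<subseteq> {1..n-1}}"

definition Zn :: "nat \<Rightarrow> int list \<Rightarrow> complex" where
  "Zn n s = (\<Sum>is\<in>idx_tuples n (length s).
              \<Prod>k<length s. (1 - zeta n ^ (is ! k)) powi (- (s ! k)))"

definition Yn :: "nat \<Rightarrow> int list \<Rightarrow> complex" where
  "Yn n s = (\<Sum>t\<in>{t. mset t = mset s}. Zn n t)"

text \<open>Y_n applied to a sequence of blocks a^{k}, given as (a,k) pairs;
  zero if some block has negative length.\<close>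
definition Yblocks :: "nat \<Rightarrow> (int \<times> int) list \<Rightarrow> complex" where
  "Yblocks n bs = (if \<exists>b\<in>set bs. snd b < 0 then 0
                   else Yn n (concat (map (\<lambda>(a,k). replicate (nat k) a) bs)))"

end

theory Submission
  imports Defs
begin

(* Write x_i = 1 - zeta_n^i for i in I = {1..n-1} and index monomials by exponent vectors: a
   function f on I stands for prod_i x_i^(-f i), and Y_n(s) is the sum of these monomials over all
   f whose nonzero values form the multiset s.  The two factors on the left are sums over vectors
   g with values in {0,2} (m twos) and h with values in {0,-1} (l entries -1); their product is the
   sum of the monomials of g + h, and (g, h) can be read off from g + h, whose values 2, 1, -1, 0
   mark the positions where (g i, h i) is (2,0), (2,-1), (0,-1), (0,0).  If g + h never takes the
   value -1 it is an exponent vector of 2^{m-l} 1^l.  If it takes the value -1 exactly j+1 times,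
   pulling out prod_i x_i raises every exponent by one and leaves an exponent vector of
   3^{m-l+1+j} 2^{l-1-j} 1^{n-m-2-j}. *)

lemma zeta_power_ne_1:
  assumes "0 < i" "i < n"
  shows "zeta n ^ i \<noteq> 1"
proof
  assume "zeta n ^ i = 1"
  then have "cis (2 * pi * real i / real n) = cis (2 * pi * real 0 / real n)"
    by (simp add: zeta_def DeMoivre mult_ac)
  then have "i = 0"
    using bij_betw_roots_unity[of n] assms unfolding bij_betw_def inj_on_def by auto
  with assms show False by simp
qed

definition monomial :: "('a \<Rightarrow> 'b::field) \<Rightarrow> 'a set \<Rightarrow> ('a \<Rightarrow> int) \<Rightarrow> 'b" where
  "monomial x I f = (\<Prod>i\<in>I. x i powi (- f i))"

lemma monomial_add:
  assumes "\<forall>i\<in>I. x i \<noteq> 0"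
  shows "monomial x I f * monomial x I g = monomial x I (\<lambda>i. f i + g i)"
  unfolding monomial_def prod.distrib[symmetric]
  by (rule prod.cong) (simp_all add: assms power_int_add[symmetric] add.commute)

definition shift_on :: "'a set \<Rightarrow> ('a \<Rightarrow> int) \<Rightarrow> 'a \<Rightarrow> int" where
  "shift_on I f i = (if i \<in> I then f i + 1 else 0)"

lemma monomial_eq_prod_shift_on:
  assumes "\<forall>i\<in>I. x i \<noteq> 0"
  shows "monomial x I f = prod x I * monomial x I (shift_on I f)"
  unfolding monomial_def shift_on_def prod.distrib[symmetric]
proof (rule prod.cong)
  fix i assume "i \<in> I"
  then have "x i powi (1 + - (f i + 1)) = x i powi 1 * x i powi (- (f i + 1))"
    using assms by (intro power_int_add) auto
  with \<open>i \<in> I\<close> show "x i powi - f i = x i * x i powi - (if i \<in> I then f i + 1 else 0)"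
    by simp
qed simp

lemma monomial_eq_prod_nth:
  assumes "finite I" "distinct js" "set js \<subseteq> I" "\<forall>i\<in>I - set js. f i = 0"
  shows "monomial x I f = (\<Prod>k<length js. x (js ! k) powi (- f (js ! k)))"
proof -
  have "monomial x I f = (\<Prod>i\<in>set js. x i powi (- f i))"
    unfolding monomial_def using assms by (intro prod.mono_neutral_right) auto
  also have "\<dots> = (\<Prod>k<length js. x (js ! k) powi (- f (js ! k)))"
    using assms(2) by (simp add: prod.distinct_set_conv_list prod.list_conv_set_nth atLeast0LessThan)
  finally show ?thesis .
qed

definition exponent_vectors :: "'a set \<Rightarrow> int list \<Rightarrow> ('a \<Rightarrow> int) set" where
  "exponent_vectors I s = {f. (\<forall>i. i \<notin> I \<longrightarrow> f i = 0) \<and>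
     (\<forall>v. v \<noteq> 0 \<longrightarrow> card {i\<in>I. f i = v} = count (mset s) v)}"

lemma exponent_vectors_iff:
  assumes "finite I" "0 \<notin> V" "set s \<subseteq> V"
  shows "f \<in> exponent_vectors I s \<longleftrightarrow> (\<forall>i. i \<notin> I \<longrightarrow> f i = 0) \<and> (\<forall>i\<in>I. f i = 0 \<or> f i \<in> V)
           \<and> (\<forall>v\<in>V. card {i\<in>I. f i = v} = count (mset s) v)"
proof
  assume f: "f \<in> exponent_vectors I s"
  have "f i = 0 \<or> f i \<in> V" if "i \<in> I" for i
  proof (rule ccontr)
    assume "\<not> (f i = 0 \<or> f i \<in> V)"
    then have "card {j\<in>I. f j = f i} = 0"
      using f assms by (auto simp: exponent_vectors_def count_mset_0_iff)
    moreover have "i \<in> {j\<in>I. f j = f i}" using that by simp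
    ultimately show False using assms(1) by auto
  qed
  moreover have "card {i\<in>I. f i = v} = count (mset s) v" if "v \<in> V" for v
  proof -
    have "v \<noteq> 0" using that assms(2) by blast
    with f show ?thesis by (simp add: exponent_vectors_def)
  qed
  ultimately show "(\<forall>i. i \<notin> I \<longrightarrow> f i = 0) \<and> (\<forall>i\<in>I. f i = 0 \<or> f i \<in> V)
           \<and> (\<forall>v\<in>V. card {i\<in>I. f i = v} = count (mset s) v)"
    using f by (simp add: exponent_vectors_def)
next
  assume f: "(\<forall>i. i \<notin> I \<longrightarrow> f i = 0) \<and> (\<forall>i\<in>I. f i = 0 \<or> f i \<in> V)
           \<and> (\<forall>v\<in>V. card {i\<in>I. f i = v} = count (mset s) v)"
  have "card {i\<in>I. f i = v} = count (mset s) v" if "v \<noteq> 0" for v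
  proof (cases "v \<in> V")
    case False
    then have "{i\<in>I. f i = v} = {}" using f that by auto
    moreover have "count (mset s) v = 0" using False assms(3) by (auto simp: count_mset_0_iff)
    ultimately show ?thesis by (metis card.empty)
  qed (use f in auto)
  with f show "f \<in> exponent_vectors I s" by (simp add: exponent_vectors_def)
qed

lemma finite_exponent_vectors:
  assumes "finite I" "0 \<notin> set s"
  shows "finite (exponent_vectors I s)"
proof (rule finite_subset)
  show "exponent_vectors I s \<subseteq> {f. \<forall>i. (i \<in> I \<longrightarrow> f i \<in> insert 0 (set s)) \<and> (i \<notin> I \<longrightarrow> f i = 0)}"
    using exponent_vectors_iff[OF assms(1,2) order.refl] by auto
  show "finite {f. \<forall>i. (i \<in> I \<longrightarrow> f i \<in> insert 0 (set s)) \<and> (i \<notin> I \<longrightarrow> f i = (0::int))}"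
    using assms(1) by (intro finite_set_of_finite_funs) auto
qed

lemma card_vimage_eq_sum_card_fibers:
  assumes "finite I" "finite V"
  shows "card {i\<in>I. f i \<in> V} = (\<Sum>v\<in>V. card {i\<in>I. f i = v})"
proof -
  have "{i\<in>I. f i \<in> V} = (\<Union>v\<in>V. {i\<in>I. f i = v})" by auto
  also have "card \<dots> = (\<Sum>v\<in>V. card {i\<in>I. f i = v})"
    using assms by (intro card_UN_disjoint) auto
  finally show ?thesis .
qed

lemma card_eq_sum_card_fibers:
  assumes "finite I" "finite V" "\<forall>i\<in>I. f i \<in> V"
  shows "card I = (\<Sum>v\<in>V. card {i\<in>I. f i = v})"
proof -
  have "{i\<in>I. f i \<in> V} = I" using assms(3) by blast
  then show ?thesis using card_vimage_eq_sum_card_fibers[OF assms(1,2), of f] by simp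
qed

lemma count_mset_map_distinct:
  assumes "distinct xs"
  shows "count (mset (map f xs)) v = card {x\<in>set xs. f x = v}"
proof -
  have "count (mset (map f xs)) v = count (image_mset f (mset_set (set xs))) v"
    using assms by (simp add: mset_set_set)
  also have "\<dots> = card (f -` {v} \<inter> set xs)"
    by (simp add: count_image_mset)
  also have "f -` {v} \<inter> set xs = {x\<in>set xs. f x = v}"
    by auto
  finally show ?thesis .
qed

definition placement :: "'a list \<Rightarrow> int list \<Rightarrow> 'a \<Rightarrow> int" where
  "placement xs t i = (case map_of (zip xs t) i of None \<Rightarrow> 0 | Some v \<Rightarrow> v)"

lemma placement_nth:
  assumes "distinct xs" "length xs = length t" "k < length xs"
  shows "placement xs t (xs ! k) = t ! k"
  using map_of_zip_nth[of xs t k] assms by (simp add: placement_def)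

lemma placement_notin:
  assumes "i \<notin> set xs"
  shows "placement xs t i = 0"
proof -
  have "map_of (zip xs t) i = None"
    using assms by (auto simp: map_of_eq_None_iff dest: set_zip_leftD)
  then show ?thesis by (simp add: placement_def)
qed

lemma map_placement:
  assumes "distinct xs" "length xs = length t"
  shows "map (placement xs t) xs = t"
  using assms by (intro nth_equalityI) (auto simp: placement_nth)

lemma placement_map: "placement xs (map f xs) = (\<lambda>i. if i \<in> set xs then f i else 0)"
  by (simp add: placement_def map_of_zip_map fun_eq_iff)

lemma placement_eq_0_iff:
  assumes "distinct xs" "length xs = length t" "0 \<notin> set t"
  shows "placement xs t i = 0 \<longleftrightarrow> i \<notin> set xs"
proof
  assume "placement xs t i = 0"
  show "i \<notin> set xs"
  proof
    assume "i \<in> set xs"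
    then obtain k where "k < length xs" "i = xs ! k" by (auto simp: in_set_conv_nth)
    with \<open>placement xs t i = 0\<close> assms show False
      by (metis nth_mem placement_nth)
  qed
qed (rule placement_notin)

lemma placement_mem_exponent_vectors:
  assumes "distinct xs" "length xs = length t" "set xs \<subseteq> I" "mset t = mset s"
  shows "placement xs t \<in> exponent_vectors I s"
proof -
  have "card {i\<in>I. placement xs t i = v} = count (mset s) v" if "v \<noteq> 0" for v
  proof -
    have "{i\<in>I. placement xs t i = v} = {i\<in>set xs. placement xs t i = v}"
      using assms(3) that placement_notin[of _ xs t] by auto
    then show ?thesis
      using count_mset_map_distinct[OF assms(1), of "placement xs t" v] map_placement[OF assms(1,2)] assms(4)
      by simp
  qed
  moreover have "placement xs t i = 0" if "i \<notin> I" for i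
    by (rule placement_notin) (use assms(3) that in blast)
  ultimately show ?thesis
    by (simp add: exponent_vectors_def)
qed

lemma mset_map_sorted_support:
  fixes I :: "'a::linorder set"
  assumes "finite I" "0 \<notin> set s" "f \<in> exponent_vectors I s"
  shows "mset (map f (sorted_list_of_set {i\<in>I. f i \<noteq> 0})) = mset s"
proof (rule multiset_eqI)
  fix v
  have "count (mset (map f (sorted_list_of_set {i\<in>I. f i \<noteq> 0}))) v = card {i\<in>{i\<in>I. f i \<noteq> 0}. f i = v}"
    using assms(1) by (subst count_mset_map_distinct) simp_all
  also have "\<dots> = count (mset s) v"
  proof (cases "v = 0")
    case True
    then show ?thesis using assms(2) by (simp add: count_mset_0_iff)
  next
    case False
    then have "{i\<in>{i\<in>I. f i \<noteq> 0}. f i = v} = {i\<in>I. f i = v}" by auto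
    with False assms(3) show ?thesis by (simp add: exponent_vectors_def)
  qed
  finally show "count (mset (map f (sorted_list_of_set {i\<in>I. f i \<noteq> 0}))) v = count (mset s) v" .
qed

lemma sorted_support_placement:
  assumes "sorted_wrt (<) xs" "set xs \<subseteq> I" "length xs = length t" "0 \<notin> set t"
  shows "sorted_list_of_set {i\<in>I. placement xs t i \<noteq> 0} = xs"
proof -
  have "distinct xs" "sorted xs" using assms(1) by (auto simp: strict_sorted_iff)
  moreover from this have "{i\<in>I. placement xs t i \<noteq> 0} = set xs"
    using assms(2-4) placement_eq_0_iff[of xs t] by blast
  ultimately show ?thesis
    by (simp add: sorted_list_of_set.idem_if_sorted_distinct)
qed

lemma bij_betw_exponent_vectors_placements:
  assumes "0 \<notin> set s"
  shows "bij_betw (\<lambda>f. (map f (sorted_list_of_set {i\<in>{1..n-1}. f i \<noteq> 0}),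
                        sorted_list_of_set {i\<in>{1..n-1}. f i \<noteq> 0}))
           (exponent_vectors {1..n-1} s) ({t. mset t = mset s} \<times> idx_tuples n (length s))"
proof (rule bij_betw_byWitness[where f' = "\<lambda>(t, is). placement is t"])
  let ?I = "{1..n-1}"
  let ?js = "\<lambda>f. sorted_list_of_set {i\<in>?I. f i \<noteq> 0}"
  have set_js: "set (?js f) = {i\<in>?I. f i \<noteq> 0}" for f :: "nat \<Rightarrow> int"
    by simp
  show "\<forall>f\<in>exponent_vectors ?I s. (\<lambda>(t, is). placement is t) (map f (?js f), ?js f) = f"
    by (simp only: prod.case placement_map set_js) (auto simp: exponent_vectors_def fun_eq_iff)
  show "(\<lambda>f. (map f (?js f), ?js f)) ` exponent_vectors ?I s
          \<subseteq> {t. mset t = mset s} \<times> idx_tuples n (length s)"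
  proof (rule image_subsetI)
    fix f assume "f \<in> exponent_vectors ?I s"
    then have "mset (map f (?js f)) = mset s"
      using assms by (intro mset_map_sorted_support) simp_all
    moreover from mset_eq_length[OF this] have "length (?js f) = length s"
      by simp
    ultimately show "(map f (?js f), ?js f) \<in> {t. mset t = mset s} \<times> idx_tuples n (length s)"
      by (auto simp: idx_tuples_def)
  qed
  show "\<forall>p\<in>{t. mset t = mset s} \<times> idx_tuples n (length s).
          (\<lambda>f. (map f (?js f), ?js f)) ((\<lambda>(t, is). placement is t) p) = p"
  proof
    fix p assume "p \<in> {t. mset t = mset s} \<times> idx_tuples n (length s)"
    then obtain t "is" where p: "p = (t, is)" and "mset t = mset s" "is \<in> idx_tuples n (length s)"
      by blast
    then have is_t: "sorted_wrt (<) is" "set is \<subseteq> ?I" "length is = length t" "0 \<notin> set t"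
      using assms by (auto simp: idx_tuples_def dest: mset_eq_length mset_eq_setD)
    then have "?js (placement is t) = is"
      by (rule sorted_support_placement)
    moreover have "map (placement is t) is = t"
      using is_t by (simp add: map_placement strict_sorted_iff)
    ultimately show "(\<lambda>f. (map f (?js f), ?js f)) ((\<lambda>(t, is). placement is t) p) = p"
      by (simp add: p)
  qed
  show "(\<lambda>(t, is). placement is t) ` ({t. mset t = mset s} \<times> idx_tuples n (length s))
          \<subseteq> exponent_vectors ?I s"
    by (auto simp: idx_tuples_def strict_sorted_iff intro!: placement_mem_exponent_vectors
        dest: mset_eq_length)
qed

lemma Yn_eq_sum_monomial:
  assumes "0 \<notin> set s"
  shows "Yn n s = (\<Sum>f\<in>exponent_vectors {1..n-1} s. monomial (\<lambda>i. 1 - zeta n ^ i) {1..n-1} f)"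
proof -
  let ?x = "\<lambda>i. 1 - zeta n ^ i"
  let ?js = "\<lambda>f. sorted_list_of_set {i\<in>{1..n-1}. f i \<noteq> 0}"
  let ?term = "\<lambda>(t, is). \<Prod>k<length s. ?x (is ! k) powi (- (t ! k))"
  have "Yn n s = sum ?term ({t. mset t = mset s} \<times> idx_tuples n (length s))"
    unfolding Yn_def Zn_def sum.cartesian_product[symmetric]
    by (rule sum.cong) (auto dest: mset_eq_length)
  also have "\<dots> = (\<Sum>f\<in>exponent_vectors {1..n-1} s. ?term (map f (?js f), ?js f))"
    by (rule sum.reindex_bij_betw[symmetric, OF bij_betw_exponent_vectors_placements[OF assms]])
  also have "\<dots> = (\<Sum>f\<in>exponent_vectors {1..n-1} s. monomial ?x {1..n-1} f)"
  proof (rule sum.cong)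
    fix f assume "f \<in> exponent_vectors {1..n-1} s"
    then have "(map f (?js f), ?js f) \<in> {t. mset t = mset s} \<times> idx_tuples n (length s)"
      using bij_betw_apply[OF bij_betw_exponent_vectors_placements[OF assms]] by blast
    then have "length (?js f) = length s"
      by (simp add: idx_tuples_def)
    then have "?term (map f (?js f), ?js f) = (\<Prod>k<length (?js f). ?x (?js f ! k) powi (- f (?js f ! k)))"
      by simp
    also have "\<dots> = monomial ?x {1..n-1} f"
      by (rule monomial_eq_prod_nth[symmetric]) auto
    finally show "?term (map f (?js f), ?js f) = monomial ?x {1..n-1} f" .
  qed simp
  finally show ?thesis .
qed

lemma Zn_replicate: "Zn n (replicate m c) = Yn n (replicate m c)"
proof -
  have "t = replicate m c" if "mset t = mset (replicate m c)" for t
  proof (rule replicate_eqI)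
    show "length t = m" using mset_eq_length[OF that] by simp
    show "y = c" if "y \<in> set t" for y
      using \<open>y \<in> set t\<close> mset_eq_setD[OF \<open>mset t = mset (replicate m c)\<close>] by auto
  qed
  then have "{t. mset t = mset (replicate m c)} = {replicate m c}"
    by auto
  then show ?thesis by (simp add: Yn_def)
qed

lemma mem_UN_exponent_vectors_levels:
  assumes "finite I" "L \<le> M"
  shows "f \<in> (\<Union>c\<le>min L (card I - M).
                exponent_vectors I (replicate (M - L + c) 2 @ replicate (L - c) 1 @ replicate c (-1)))
    \<longleftrightarrow> (\<forall>i. i \<notin> I \<longrightarrow> f i = 0) \<and> (\<forall>i\<in>I. f i \<in> {-1, 0, 1, 2})
        \<and> card {i\<in>I. f i \<in> {1, 2}} = M \<and> card {i\<in>I. f i \<in> {1, -1}} = L"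
proof -
  have mem_level: "f \<in> exponent_vectors I (replicate (M - L + c) 2 @ replicate (L - c) 1 @ replicate c (-1))
    \<longleftrightarrow> (\<forall>i. i \<notin> I \<longrightarrow> f i = 0) \<and> (\<forall>i\<in>I. f i \<in> {-1, 0, 1, 2}) \<and> card {i\<in>I. f i = 2} = M - L + c
        \<and> card {i\<in>I. f i = 1} = L - c \<and> card {i\<in>I. f i = -1} = c" if "c \<le> L" for c
    using that by (subst exponent_vectors_iff[OF assms(1), of "{-1, 1, 2}"]) auto
  have "card {i\<in>I. f i \<in> {-1, 1, 2}} \<le> card I"
    using assms(1) by (intro card_mono) auto
  then have card_I: "card {i\<in>I. f i = -1} + card {i\<in>I. f i = 1} + card {i\<in>I. f i = 2} \<le> card I"
    using card_vimage_eq_sum_card_fibers[OF assms(1), of "{-1, 1, 2}" f] by simp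
  have pairs: "card {i\<in>I. f i \<in> {1, 2}} = card {i\<in>I. f i = 1} + card {i\<in>I. f i = 2}"
    "card {i\<in>I. f i \<in> {1, -1}} = card {i\<in>I. f i = 1} + card {i\<in>I. f i = -1}"
    using card_vimage_eq_sum_card_fibers[OF assms(1), of "{1, 2}" f]
      card_vimage_eq_sum_card_fibers[OF assms(1), of "{1, -1}" f] by simp_all
  show ?thesis
  proof
    assume "f \<in> (\<Union>c\<le>min L (card I - M).
                exponent_vectors I (replicate (M - L + c) 2 @ replicate (L - c) 1 @ replicate c (-1)))"
    then obtain c where "c \<le> min L (card I - M)"
      and "f \<in> exponent_vectors I (replicate (M - L + c) 2 @ replicate (L - c) 1 @ replicate c (-1))"
      by blast
    then show "(\<forall>i. i \<notin> I \<longrightarrow> f i = 0) \<and> (\<forall>i\<in>I. f i \<in> {-1, 0, 1, 2})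
        \<and> card {i\<in>I. f i \<in> {1, 2}} = M \<and> card {i\<in>I. f i \<in> {1, -1}} = L"
      using mem_level[of c] pairs assms(2) by auto
  next
    assume f: "(\<forall>i. i \<notin> I \<longrightarrow> f i = 0) \<and> (\<forall>i\<in>I. f i \<in> {-1, 0, 1, 2})
        \<and> card {i\<in>I. f i \<in> {1, 2}} = M \<and> card {i\<in>I. f i \<in> {1, -1}} = L"
    define c where "c = card {i\<in>I. f i = -1}"
    have "c \<le> min L (card I - M)" using f pairs card_I by (auto simp: c_def)
    moreover have "f \<in> exponent_vectors I (replicate (M - L + c) 2 @ replicate (L - c) 1 @ replicate c (-1))"
      using mem_level[of c] f pairs assms(2) by (auto simp: c_def)
    ultimately show "f \<in> (\<Union>c\<le>min L (card I - M).
                exponent_vectors I (replicate (M - L + c) 2 @ replicate (L - c) 1 @ replicate c (-1)))"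
      by blast
  qed
qed

lemma mem_exponent_vectors_replicate:
  assumes "finite I" "v \<noteq> 0"
  shows "g \<in> exponent_vectors I (replicate M v)
    \<longleftrightarrow> (\<forall>i. i \<notin> I \<longrightarrow> g i = 0) \<and> (\<forall>i\<in>I. g i \<in> {0, v}) \<and> card {i\<in>I. g i = v} = M"
  using assms(2) by (subst exponent_vectors_iff[OF assms(1), of "{v}"]) auto

lemma exponent_vectors_replicate_range:
  assumes "finite I" "v \<noteq> 0" "g \<in> exponent_vectors I (replicate M v)"
  shows "g i \<in> {0, v}"
  using assms(3) unfolding mem_exponent_vectors_replicate[OF assms(1,2)] by (cases "i \<in> I") auto

lemma add_mem_UN_exponent_vectors_levels:
  assumes "finite I" "L \<le> M"
    and "g \<in> exponent_vectors I (replicate M 2)" "h \<in> exponent_vectors I (replicate L (-1))"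
  shows "(\<lambda>i. g i + h i) \<in> (\<Union>c\<le>min L (card I - M).
           exponent_vectors I (replicate (M - L + c) 2 @ replicate (L - c) 1 @ replicate c (-1)))"
proof -
  note mem_A = mem_exponent_vectors_replicate[OF assms(1) numeral_neq_zero]
    and mem_B = mem_exponent_vectors_replicate[OF assms(1) neg_one_neq_zero]
  have ranges: "g i \<in> {0, 2} \<and> h i \<in> {0, -1}" for i
    using exponent_vectors_replicate_range[OF assms(1) _ assms(3)]
      exponent_vectors_replicate_range[OF assms(1) _ assms(4)] by simp
  have "g i + h i \<in> {1, 2} \<longleftrightarrow> g i = 2" "g i + h i \<in> {1, -1} \<longleftrightarrow> h i = -1"
    "g i + h i \<in> {-1, 0, 1, 2}" for i
    using ranges[of i] by auto
  with assms(3,4) show ?thesis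
    unfolding mem_UN_exponent_vectors_levels[OF assms(1,2)] mem_A mem_B
    by simp
qed

lemma split_mem_exponent_vectors:
  assumes "finite I" "L \<le> M"
    and "f \<in> (\<Union>c\<le>min L (card I - M).
           exponent_vectors I (replicate (M - L + c) 2 @ replicate (L - c) 1 @ replicate c (-1)))"
  shows "(\<lambda>i. if f i \<in> {1, 2} then 2 else 0) \<in> exponent_vectors I (replicate M 2)"
    and "(\<lambda>i. if f i \<in> {1, -1} then -1 else 0) \<in> exponent_vectors I (replicate L (-1))"
proof -
  note mem_A = mem_exponent_vectors_replicate[OF assms(1) numeral_neq_zero]
    and mem_B = mem_exponent_vectors_replicate[OF assms(1) neg_one_neq_zero]
  have f: "(\<forall>i. i \<notin> I \<longrightarrow> f i = 0) \<and> card {i\<in>I. f i \<in> {1, 2}} = M \<and> card {i\<in>I. f i \<in> {1, -1}} = L"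
    using assms(3) unfolding mem_UN_exponent_vectors_levels[OF assms(1,2)] by blast
  have "{i\<in>I. (if f i \<in> {1, 2} then 2 else 0) = (2::int)} = {i\<in>I. f i \<in> {1, 2}}"
    "{i\<in>I. (if f i \<in> {1, -1} then -1 else 0) = (-1::int)} = {i\<in>I. f i \<in> {1, -1}}"
    by auto
  with f show "(\<lambda>i. if f i \<in> {1, 2} then 2 else 0) \<in> exponent_vectors I (replicate M 2)"
    and "(\<lambda>i. if f i \<in> {1, -1} then -1 else 0) \<in> exponent_vectors I (replicate L (-1))"
    unfolding mem_A mem_B by auto
qed

lemma bij_betw_add_exponent_vectors:
  assumes "finite I" "L \<le> M"
  shows "bij_betw (\<lambda>(g, h) i. g i + h i)
           (exponent_vectors I (replicate M 2) \<times> exponent_vectors I (replicate L (-1)))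
           (\<Union>c\<le>min L (card I - M).
              exponent_vectors I (replicate (M - L + c) 2 @ replicate (L - c) 1 @ replicate c (-1)))"
    (is "bij_betw ?add (?A \<times> ?B) ?U")
proof (rule bij_betw_byWitness[where f' = "\<lambda>f. (\<lambda>i. if f i \<in> {1, 2} then 2 else 0,
                                                \<lambda>i. if f i \<in> {1, -1} then -1 else 0)"])
  have "(if g i + h i \<in> {1, 2} then 2 else 0) = g i \<and> (if g i + h i \<in> {1, -1} then -1 else 0) = h i"
    if "g \<in> ?A" "h \<in> ?B" for g h i
  proof -
    have "g i \<in> {0, 2} \<and> h i \<in> {0, -1}"
      using exponent_vectors_replicate_range[OF assms(1) _ that(1)]
        exponent_vectors_replicate_range[OF assms(1) _ that(2)] by simp
    then show ?thesis by auto
  qed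
  then show "\<forall>p\<in>?A \<times> ?B. (\<lambda>f. (\<lambda>i. if f i \<in> {1, 2} then 2 else 0,
                                 \<lambda>i. if f i \<in> {1, -1} then -1 else 0)) (?add p) = p"
    by (auto simp: fun_eq_iff)
  have "f i \<in> {-1, 0, 1, 2}" if "f \<in> ?U" for f i
    using that unfolding mem_UN_exponent_vectors_levels[OF assms] by (cases "i \<in> I") auto
  then show "\<forall>f\<in>?U. ?add (\<lambda>i. if f i \<in> {1, 2} then 2 else 0, \<lambda>i. if f i \<in> {1, -1} then -1 else 0) = f"
    by (force simp: fun_eq_iff)
  show "?add ` (?A \<times> ?B) \<subseteq> ?U"
    using add_mem_UN_exponent_vectors_levels[OF assms] by auto
  show "(\<lambda>f. (\<lambda>i. if f i \<in> {1, 2} then 2 else 0, \<lambda>i. if f i \<in> {1, -1} then -1 else 0)) ` ?U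
          \<subseteq> ?A \<times> ?B"
    using split_mem_exponent_vectors[OF assms] by auto
qed

lemma bij_betw_shift_on_exponent_vectors:
  assumes "finite I" "a + b + c \<le> card I"
  shows "bij_betw (shift_on I)
           (exponent_vectors I (replicate a 2 @ replicate b 1 @ replicate c (-1)))
           (exponent_vectors I (replicate a 3 @ replicate b 2 @ replicate (card I - a - b - c) 1))"
    (is "bij_betw _ ?S ?T")
proof (rule bij_betw_byWitness[where f' = "\<lambda>F i. if i \<in> I then F i - 1 else 0"])
  have mem_S: "f \<in> ?S \<longleftrightarrow> (\<forall>i. i \<notin> I \<longrightarrow> f i = 0) \<and> (\<forall>i\<in>I. f i \<in> {-1, 0, 1, 2})
      \<and> card {i\<in>I. f i = 2} = a \<and> card {i\<in>I. f i = 1} = b \<and> card {i\<in>I. f i = -1} = c" for f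
    by (subst exponent_vectors_iff[OF assms(1), of "{-1, 1, 2}"]) auto
  have mem_T: "F \<in> ?T \<longleftrightarrow> (\<forall>i. i \<notin> I \<longrightarrow> F i = 0) \<and> (\<forall>i\<in>I. F i \<in> {0, 1, 2, 3})
      \<and> card {i\<in>I. F i = 3} = a \<and> card {i\<in>I. F i = 2} = b \<and> card {i\<in>I. F i = 1} = card I - a - b - c"
    for F
    by (subst exponent_vectors_iff[OF assms(1), of "{1, 2, 3}"]) auto
  have shift_fiber: "{i\<in>I. shift_on I f i = v} = {i\<in>I. f i = v - 1}" for f v
    by (auto simp: shift_on_def)
  have unshift_fiber: "{i\<in>I. (if i \<in> I then F i - 1 else 0) = v} = {i\<in>I. F i = v + 1}" for F :: "'a \<Rightarrow> int" and v
    by auto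
  show "\<forall>f\<in>?S. (\<lambda>i. if i \<in> I then shift_on I f i - 1 else 0) = f"
    by (auto simp: shift_on_def fun_eq_iff mem_S)
  show "\<forall>F\<in>?T. shift_on I (\<lambda>i. if i \<in> I then F i - 1 else 0) = F"
    by (auto simp: shift_on_def fun_eq_iff exponent_vectors_def)
  show "shift_on I ` ?S \<subseteq> ?T"
  proof (rule image_subsetI)
    fix f assume "f \<in> ?S"
    then have f: "(\<forall>i. i \<notin> I \<longrightarrow> f i = 0) \<and> (\<forall>i\<in>I. f i \<in> {-1, 0, 1, 2})
      \<and> card {i\<in>I. f i = 2} = a \<and> card {i\<in>I. f i = 1} = b \<and> card {i\<in>I. f i = -1} = c"
      unfolding mem_S .
    then have "card I = card {i\<in>I. f i = -1} + card {i\<in>I. f i = 0} + card {i\<in>I. f i = 1} + card {i\<in>I. f i = 2}"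
      using card_eq_sum_card_fibers[OF assms(1), of "{-1, 0, 1, 2}" f] by simp
    with f show "shift_on I f \<in> ?T"
      unfolding mem_T shift_fiber by (auto simp: shift_on_def)
  qed
  show "(\<lambda>F i. if i \<in> I then F i - 1 else 0) ` ?T \<subseteq> ?S"
  proof (rule image_subsetI)
    fix F assume "F \<in> ?T"
    then have F: "(\<forall>i. i \<notin> I \<longrightarrow> F i = 0) \<and> (\<forall>i\<in>I. F i \<in> {0, 1, 2, 3})
      \<and> card {i\<in>I. F i = 3} = a \<and> card {i\<in>I. F i = 2} = b \<and> card {i\<in>I. F i = 1} = card I - a - b - c"
      unfolding mem_T .
    then have "card I = card {i\<in>I. F i = 0} + card {i\<in>I. F i = 1} + card {i\<in>I. F i = 2} + card {i\<in>I. F i = 3}"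
      using card_eq_sum_card_fibers[OF assms(1), of "{0, 1, 2, 3}" F] by simp
    with F assms(2) show "(\<lambda>i. if i \<in> I then F i - 1 else 0) \<in> ?S"
      unfolding mem_S unshift_fiber by auto
  qed
qed

lemma sum_monomial_eq_prod_shift_on:
  fixes x :: "'a \<Rightarrow> 'b::field"
  assumes "finite I" "\<forall>i\<in>I. x i \<noteq> 0" "a + b + c \<le> card I"
  shows "(\<Sum>f\<in>exponent_vectors I (replicate a 2 @ replicate b 1 @ replicate c (-1)). monomial x I f)
       = prod x I * (\<Sum>f\<in>exponent_vectors I (replicate a 3 @ replicate b 2 @ replicate (card I - a - b - c) 1).
                       monomial x I f)"
proof -
  have "(\<Sum>f\<in>exponent_vectors I (replicate a 2 @ replicate b 1 @ replicate c (-1)). monomial x I f)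
      = (\<Sum>f\<in>exponent_vectors I (replicate a 2 @ replicate b 1 @ replicate c (-1)).
           prod x I * monomial x I (shift_on I f))"
    by (rule sum.cong[OF refl]) (rule monomial_eq_prod_shift_on[OF assms(2)])
  also have "\<dots> = prod x I * (\<Sum>f\<in>exponent_vectors I (replicate a 3 @ replicate b 2
                                                @ replicate (card I - a - b - c) 1). monomial x I f)"
    by (simp add: sum_distrib_left[symmetric]
        sum.reindex_bij_betw[OF bij_betw_shift_on_exponent_vectors[OF assms(1,3)]])
  finally show ?thesis .
qed

lemma sum_monomial_product_expansion:
  fixes x :: "'a \<Rightarrow> 'b::field"
  assumes "finite I" "\<forall>i\<in>I. x i \<noteq> 0" "L \<le> M"
  shows "(\<Sum>g\<in>exponent_vectors I (replicate M 2). monomial x I g)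
           * (\<Sum>h\<in>exponent_vectors I (replicate L (-1)). monomial x I h)
         = (\<Sum>f\<in>exponent_vectors I (replicate (M - L) 2 @ replicate L 1). monomial x I f)
           + prod x I * (\<Sum>c\<in>{1..min L (card I - M)}.
               \<Sum>f\<in>exponent_vectors I (replicate (M - L + c) 3 @ replicate (L - c) 2
                                          @ replicate (card I - M - c) 1). monomial x I f)"
proof -
  let ?E = "exponent_vectors I" and ?W = "monomial x I"
  let ?level = "\<lambda>c. ?E (replicate (M - L + c) 2 @ replicate (L - c) 1 @ replicate c (-1))"
  define k where "k = min L (card I - M)"
  have "card {i\<in>I. f i = -1} = c" if "f \<in> ?level c" for f c
    using that unfolding exponent_vectors_def by simp
  then have disjoint: "?level c \<inter> ?level c' = {}" if "c \<noteq> c'" for c c'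
    using that by blast
  have level_eq: "sum ?W (?level c) = prod x I * sum ?W (?E (replicate (M - L + c) 3 @ replicate (L - c) 2
                                          @ replicate (card I - M - c) 1))" if "c \<in> {1..k}" for c
  proof -
    have "M - L + c + (L - c) + c \<le> card I" "card I - (M - L + c) - (L - c) - c = card I - M - c"
      using that assms(3) by (auto simp: k_def)
    from sum_monomial_eq_prod_shift_on[OF assms(1,2) this(1), unfolded this(2)] show ?thesis .
  qed
  have "sum ?W (?E (replicate M 2)) * sum ?W (?E (replicate L (-1)))
      = (\<Sum>p\<in>?E (replicate M 2) \<times> ?E (replicate L (-1)). ?W ((\<lambda>(g, h) i. g i + h i) p))"
    by (simp add: sum_product sum.cartesian_product monomial_add[OF assms(2)] split_def)
  also have "\<dots> = sum ?W (\<Union>c\<le>k. ?level c)"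
    unfolding k_def by (rule sum.reindex_bij_betw[OF bij_betw_add_exponent_vectors[OF assms(1,3)]])
  also have "\<dots> = (\<Sum>c\<le>k. sum ?W (?level c))"
    using disjoint by (intro sum.UNION_disjoint) (auto intro: finite_exponent_vectors[OF assms(1)])
  also have "\<dots> = sum ?W (?level 0) + (\<Sum>c\<in>{1..k}. sum ?W (?level c))"
    by (simp add: atMost_atLeast0 sum.atLeast_Suc_atMost)
  also have "\<dots> = sum ?W (?E (replicate (M - L) 2 @ replicate L 1))
      + prod x I * (\<Sum>c\<in>{1..k}. sum ?W (?E (replicate (M - L + c) 3 @ replicate (L - c) 2
                                          @ replicate (card I - M - c) 1)))"
    by (simp add: level_eq sum_distrib_left)
  finally show ?thesis unfolding k_def .
qed

lemma sum_Yblocks_eq_sum_Yn_levels: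
  fixes N M L :: nat
  assumes "L \<le> M"
  shows "(\<Sum>j=0..int N - int M - 2.
            Yblocks N [(3, int M - int L + 1 + j), (2, int L - 1 - j), (1, int N - int M - 2 - j)])
       = (\<Sum>c\<in>{1..min L (N - 1 - M)}.
            Yn N (replicate (M - L + c) 3 @ replicate (L - c) 2 @ replicate (N - 1 - M - c) 1))"
proof -
  let ?Y = "\<lambda>j. Yblocks N [(3, int M - int L + 1 + j), (2, int L - 1 - j), (1, int N - int M - 2 - j)]"
  have Yblocks_of_nat: "Yblocks N [(3, int a), (2, int b), (1, int d)]
      = Yn N (replicate a 3 @ replicate b 2 @ replicate d 1)" for a b d
    by (simp add: Yblocks_def)
  have Y_eq: "?Y j = Yn N (replicate (M - L + c) 3 @ replicate (L - c) 2 @ replicate (N - 1 - M - c) 1)"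
    if "j \<in> {0..min (int L - 1) (int N - int M - 2)}" and "c = nat j + 1" for j c
  proof -
    have "int M - int L + 1 + j = int (M - L + c)" "int L - 1 - j = int (L - c)"
      "int N - int M - 2 - j = int (N - 1 - M - c)"
      using that assms by (auto simp: of_nat_diff)
    then show ?thesis by (simp only: Yblocks_of_nat)
  qed
  \<comment> \<open>the terms with \<open>j \<ge> L\<close> vanish: their block of 2s has negative length\<close>
  have "(\<Sum>j=0..int N - int M - 2. ?Y j) = (\<Sum>j=0..min (int L - 1) (int N - int M - 2). ?Y j)"
    by (rule sum.mono_neutral_right) (auto simp: Yblocks_def)
  also have "\<dots> = (\<Sum>c\<in>{1..min L (N - 1 - M)}.
            Yn N (replicate (M - L + c) 3 @ replicate (L - c) 2 @ replicate (N - 1 - M - c) 1))"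
  proof (rule sum.reindex_bij_witness[where i = "\<lambda>c. int c - 1" and j = "\<lambda>j. nat j + 1"])
    fix j assume "j \<in> {0..min (int L - 1) (int N - int M - 2)}"
    from Y_eq[OF this refl] show "Yn N (replicate (M - L + (nat j + 1)) 3 @ replicate (L - (nat j + 1)) 2
        @ replicate (N - 1 - M - (nat j + 1)) 1) = ?Y j" ..
  qed auto
  finally show ?thesis .
qed

theorem proposition2:
  fixes n m l :: int
  assumes "n - 1 \<ge> m" and "m \<ge> l" and "l \<ge> 0"
  shows "Zn (nat n) (replicate (nat m) 2) * Zn (nat n) (replicate (nat l) (-1))
    = Yblocks (nat n) [(2, m - l), (1, l)]
      + (\<Prod>r=1..nat n - 1. (1 - zeta (nat n) ^ r))
        * (\<Sum>j=0..n - m - 2. Yblocks (nat n) [(3, m - l + 1 + j), (2, l - 1 - j), (1, n - m - 2 - j)])"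
proof -
  have "0 \<le> n" "0 \<le> m" "0 \<le> l" using assms by linarith+
  then obtain N M L where n: "n = int N" and m: "m = int M" and l: "l = int L"
    by (metis nonneg_int_cases)
  with assms have "L \<le> M" by simp
  have "\<forall>i\<in>{1..N - 1}. 1 - zeta N ^ i \<noteq> 0"
    using zeta_power_ne_1[of _ N] by auto
  from sum_monomial_product_expansion[OF _ this \<open>L \<le> M\<close>]
  have expansion: "Zn N (replicate M 2) * Zn N (replicate L (-1))
      = Yn N (replicate (M - L) 2 @ replicate L 1) + (\<Prod>r=1..N - 1. 1 - zeta N ^ r)
          * (\<Sum>c\<in>{1..min L (N - 1 - M)}.
               Yn N (replicate (M - L + c) 3 @ replicate (L - c) 2 @ replicate (N - 1 - M - c) 1))"
    by (simp add: Zn_replicate Yn_eq_sum_monomial)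
  have first_sum: "Yblocks N [(2, int M - int L), (1, int L)] = Yn N (replicate (M - L) 2 @ replicate L 1)"
    using \<open>L \<le> M\<close> by (simp add: Yblocks_def nat_diff_distrib')
  show ?thesis
    unfolding n m l nat_int first_sum sum_Yblocks_eq_sum_Yn_levels[OF \<open>L \<le> M\<close>] by (rule expansion)
qed

end
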